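(* Consider an execution of algorithm $\mathcal{A}_2$ (described in the context) in a synchronous message-passing system of $n$ processes with authentication in which up to $t<n$ processes are Byzantine. If all correct processes propose the same value $v$, then all correct processes decide $v$.
   Context: Model: synchronous rounds, reliable channels between all pairs, unforgeable signatures, up to $t$ Byzantine processes; the others are correct. Terminating Reliable Broadcast (TRB) with sender $p$: $p$ broadcasts a value $m$ and every process delivers either a value or a special value $SF$, satisfying: (Termination) every correct process delivers some value; (Validity) if the sender is correct and broadcasts $m$, every correct process delivers $m$; (Integrity) a process delivers at most once, and if it delivers $m\ne SF$ then $m$ was broadcast by the sender; (Agreement) if a correct process delivers $m$, all correct processes deliver $m$. TRB is implemented in this model in $t+1$ rounds by the classical authenticated signature-chain algorithm. Algorithm $\mathcal{A}_2$, code of $p_i$ with input $v_i$: Phase 1: $n$ instances of TRB are run, instance $q$ having $p_q$ as sender; $p_i$ broadcasts $v_i$ in its own instance and sets $L_i[p_i] := v_i$; for each process $q$, $p_i$ sets $L_i[q]$ to the value (possibly $SF$) delivered in the instance with sender $q$. Phase 2: if at least $n-t$ entries of $L_i$ equal $v_i$, decide $v_i$; else, if some value $v$ appears at least $n-t$ times in $L_i$, decide such a $v$; else decide $\bot$. *)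

theory Defs
  imports Main
begin

text \<open>Processes are 0..<n. A TRB instance delivers either a value or the special value SF.\<close>
datatype 'v trb_out = Val 'v | SF

text \<open>Phase 1 of A2: the vector L_i of process i. deliv q i is the value (possibly SF)
  delivered by process i in the TRB instance whose sender is q; v i is the input of i.\<close>
definition A2_L :: "(nat \<Rightarrow> 'v) \<Rightarrow> (nat \<Rightarrow> nat \<Rightarrow> 'v trb_out) \<Rightarrow> nat \<Rightarrow> nat \<Rightarrow> 'v trb_out" where
  "A2_L v deliv i q = (if q = i then Val (v i) else deliv q i)"

definition occ :: "nat \<Rightarrow> (nat \<Rightarrow> 'a) \<Rightarrow> 'a \<Rightarrow> nat" where
  "occ n L x = card {q. q < n \<and> L q = x}"

text \<open>Phase 2 of A2 (nondeterministic in the choice of "such a v"):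
  A2_decision n t vi L d holds iff d is a possible decision of a process with input vi
  and vector L. The decision None stands for \<bottom>.\<close>
definition A2_decision :: "nat \<Rightarrow> nat \<Rightarrow> 'v \<Rightarrow> (nat \<Rightarrow> 'v trb_out) \<Rightarrow> 'v trb_out option \<Rightarrow> bool" where
  "A2_decision n t vi L d =
     (if occ n L (Val vi) \<ge> n - t then d = Some (Val vi)
      else if (\<exists>w. occ n L w \<ge> n - t) then (\<exists>w. occ n L w \<ge> n - t \<and> d = Some w)
      else d = None)"

end

theory Submission
  imports Defs
begin

(* The at least n - t correct processes all propose v0, and by TRB validity every correct
   process delivers v0 in each of their instances.  So v0 fills at least n - t entries of the
   vector of every correct process, and the first branch of Phase 2 makes it decide v0. *)

lemma card_ge_diff_if_card_complement_le:
  assumes "finite U" and "A \<subseteq> U" and "card (U - A) \<le> t"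
  shows "card U - t \<le> card A"
  using assms by (simp add: card_Diff_subset finite_subset)

lemma card_le_occ:
  assumes "S \<subseteq> {..<n}" and "\<And>q. q \<in> S \<Longrightarrow> L q = x"
  shows "card S \<le> occ n L x"
  unfolding occ_def by (rule card_mono) (use assms in auto)

lemma A2_decision_own_value:
  assumes "n - t \<le> occ n L (Val vi)" and "A2_decision n t vi L d"
  shows "d = Some (Val vi)"
  using assms by (simp add: A2_decision_def)

lemma A2_L_eq_Val:
  assumes "q = i \<or> deliv q i = Val (v q)"
  shows "A2_L v deliv i q = Val (v q)"
  using assms by (auto simp: A2_L_def)

theorem lemma8:
  fixes n t :: nat
    and Correct :: "nat set"
    and v :: "nat \<Rightarrow> 'v"
    and deliv :: "nat \<Rightarrow> nat \<Rightarrow> 'v trb_out"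
    and dec :: "nat \<Rightarrow> 'v trb_out option"
    and v0 :: 'v
  assumes "t < n"
    and "Correct \<subseteq> {..<n}"
    and "card ({..<n} - Correct) \<le> t"
    \<comment> \<open>TRB validity: a correct sender's value is delivered by every correct process\<close>
    and trb_validity: "\<And>q i. q \<in> Correct \<Longrightarrow> i \<in> Correct \<Longrightarrow> deliv q i = Val (v q)"
    \<comment> \<open>TRB agreement: correct processes deliver the same value in each instance\<close>
    and trb_agreement: "\<And>q i j. q < n \<Longrightarrow> i \<in> Correct \<Longrightarrow> j \<in> Correct \<Longrightarrow> deliv q i = deliv q j"
    \<comment> \<open>each correct process decides according to Phase 2 of A2\<close>
    and decides: "\<And>i. i \<in> Correct \<Longrightarrow> A2_decision n t (v i) (A2_L v deliv i) (dec i)"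
    and same_input: "\<And>i. i \<in> Correct \<Longrightarrow> v i = v0"
  shows "\<forall>i \<in> Correct. dec i = Some (Val v0)"
proof
  fix i assume i: "i \<in> Correct"
  have "n - t \<le> card Correct"
    using card_ge_diff_if_card_complement_le[OF _ assms(2,3)] by simp
  also have "card Correct \<le> occ n (A2_L v deliv i) (Val v0)"
  proof (rule card_le_occ[OF assms(2)])
    fix q assume "q \<in> Correct"
    then show "A2_L v deliv i q = Val v0"
      using A2_L_eq_Val trb_validity[OF _ i] same_input by metis
  qed
  finally have "n - t \<le> occ n (A2_L v deliv i) (Val (v i))"
    using same_input[OF i] by simp
  then show "dec i = Some (Val v0)"
    using A2_decision_own_value decides[OF i] same_input[OF i] by metis
qed

end
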